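(* Let $\pi\in\mathcal{S}_n$ be a Schröder permutation. Then for every $k\ge1$, $\pi$ avoids the pattern $12\cdots k$ if and only if $\phi(\pi)$ avoids $12\cdots k$.
   Context: A permutation avoids $\tau\in\mathcal{S}_k$ if no subsequence of length $k$ is in the same relative order as $\tau$; $12\cdots k$ is the increasing pattern of length $k$. A Schröder permutation is one avoiding both $1243$ and $2143$. Represent $\pi\in\mathcal{S}_n$ by an $n\times n$ array, rows $i$ numbered top to bottom, columns $j$ left to right, with a dot in square $(i,\pi_i)$. The diagram $D(\pi)$ is the set of squares $(i,j)$ with $\pi_i>j$ and $\pi^{-1}(j)>i$. The essential set $\mathcal{E}(\pi)$ is the set of $(i,j)\in D(\pi)$ with $(i+1,j)\notin D(\pi)$ and $(i,j+1)\notin D(\pi)$ (squares outside the array count as not in $D(\pi)$). The rank of $(i,j)$ with respect to $\pi$ is $\rho_\pi(i,j)=\#\{k<i:\pi_k<j\}$; $\mathcal{E}_r(\pi)$ is the set of elements of $\mathcal{E}(\pi)$ of rank $r$. A permutation is uniquely determined by its essential set together with the ranks of its elements (Fulton). For a Schröder permutation $\pi\in\mathcal{S}_n$, let $\mathcal{E}^*(\pi)$ be obtained from $\mathcal{E}(\pi)$ by replacing each $(i,j)\in\mathcal{E}_1(\pi)$ by $(i-1,j-1)$; there is a unique $\sigma\in\mathcal{S}_n$ with $\mathcal{E}(\sigma)=\mathcal{E}^*(\pi)$ and all elements of $\mathcal{E}(\sigma)$ of rank $0$ (with respect to $\sigma$), and $\phi(\pi):=\sigma$ (a $132$-avoiding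 permutation). *)

theory Defs
  imports "HOL-Combinatorics.Permutations"
begin

text \<open>Permutations of [n] = {1..n} are functions \<open>\<pi> :: nat \<Rightarrow> nat\<close> with \<open>\<pi> permutes {1..n}\<close>.
Patterns are given as lists of values (one-line notation), e.g. [1,2,4,3].\<close>

definition contains_pattern :: "nat \<Rightarrow> (nat \<Rightarrow> nat) \<Rightarrow> nat list \<Rightarrow> bool" where
  "contains_pattern n \<pi> \<tau> \<longleftrightarrow>
     (\<exists>f :: nat \<Rightarrow> nat.
        (\<forall>a b. a < b \<and> b < length \<tau> \<longrightarrow> f a < f b) \<and>
        (\<forall>a < length \<tau>. f a \<in> {1..n}) \<and>
        (\<forall>a < length \<tau>. \<forall>b < length \<tau>. (\<pi> (f a) < \<pi> (f b) \<longleftrightarrow> \<tau> ! a < \<tau> ! b)))"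

definition avoids :: "nat \<Rightarrow> (nat \<Rightarrow> nat) \<Rightarrow> nat list \<Rightarrow> bool" where
  "avoids n \<pi> \<tau> \<longleftrightarrow> \<not> contains_pattern n \<pi> \<tau>"

definition incr_pattern :: "nat \<Rightarrow> nat list" where
  "incr_pattern k = [1..<k+1]"

definition schroeder :: "nat \<Rightarrow> (nat \<Rightarrow> nat) \<Rightarrow> bool" where
  "schroeder n \<pi> \<longleftrightarrow> avoids n \<pi> [1,2,4,3] \<and> avoids n \<pi> [2,1,4,3]"

definition diagram :: "nat \<Rightarrow> (nat \<Rightarrow> nat) \<Rightarrow> (nat \<times> nat) set" where
  "diagram n \<pi> = {(i, j). i \<in> {1..n} \<and> j \<in> {1..n} \<and> \<pi> i > j \<and> inv \<pi> j > i}"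

definition essential_set :: "nat \<Rightarrow> (nat \<Rightarrow> nat) \<Rightarrow> (nat \<times> nat) set" where
  "essential_set n \<pi> = {(i, j) \<in> diagram n \<pi>.
      (i + 1, j) \<notin> diagram n \<pi> \<and> (i, j + 1) \<notin> diagram n \<pi>}"

definition rank :: "(nat \<Rightarrow> nat) \<Rightarrow> nat \<times> nat \<Rightarrow> nat" where
  "rank \<pi> ij = card {k. 1 \<le> k \<and> k < fst ij \<and> \<pi> k < snd ij}"

definition essential_star :: "nat \<Rightarrow> (nat \<Rightarrow> nat) \<Rightarrow> (nat \<times> nat) set" where
  "essential_star n \<pi> =
     {e \<in> essential_set n \<pi>. rank \<pi> e \<noteq> 1} \<union>
     {(i - 1, j - 1) | i j. (i, j) \<in> essential_set n \<pi> \<and> rank \<pi> (i, j) = 1}"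

definition phi :: "nat \<Rightarrow> (nat \<Rightarrow> nat) \<Rightarrow> (nat \<Rightarrow> nat)" where
  "phi n \<pi> = (THE \<sigma>. \<sigma> permutes {1..n} \<and> essential_set n \<sigma> = essential_star n \<pi> \<and>
                      (\<forall>e \<in> essential_set n \<sigma>. rank \<sigma> e = 0))"

end

theory Submission
  imports Defs
begin

text \<open>Let \<open>m\<^sub>i\<close> and \<open>s\<^sub>i\<close> be the smallest and the second smallest of
  \<open>\<pi>(1), ..., \<pi>(i)\<close>. The essential squares of rank 0 are the squares \<open>(i, m\<^sub>i - 1)\<close> with
  \<open>\<pi>(i+1) < m\<^sub>i\<close>, those of rank 1 are the squares \<open>(i, s\<^sub>i - 1)\<close> with \<open>\<pi>(i) \<noteq> m\<^sub>i\<close>,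
  \<open>m\<^sub>i + 1 < s\<^sub>i\<close> and \<open>\<pi>(i+1) < s\<^sub>i\<close>, and a Schroeder permutation has no essential squares
  of larger rank: two entries smaller than \<open>j\<close> in rows above an essential square \<open>(i, j)\<close> would
  form a 1243 or a 2143 together with \<open>\<pi>(i) > j\<close> and the entry \<open>j\<close> further down.
  Hence \<open>E*(\<pi>)\<close> is the set of corners of the Young diagram with rows
  \<open>\<lambda>\<^sub>i = max m\<^sub>i (s\<^sub>i\<^sub>+\<^sub>1 - 1) - 1\<close> for \<open>i < n\<close> and \<open>\<lambda>\<^sub>n = 0\<close>, and \<open>\<phi>(\<pi>)\<close> is the dominant permutation with this diagram.
  A dominant permutation avoids 132, so it is again Schroeder, and it is fixed by \<open>\<phi>\<close>; thus
  \<open>\<phi>(\<pi>)\<close> has the same shape \<open>\<lambda>\<close> as \<open>\<pi>\<close>.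

  For every Schroeder permutation, \<open>12\<dots>k\<close> occurs iff \<open>k + i + \<lambda>\<^sub>i \<le> n + 1\<close> for some row \<open>i\<close>.
  If \<open>i + 1\<close> is the position of the second entry of an increasing subsequence, all later
  entries are larger than \<open>m\<^sub>i\<close> and \<open>s\<^sub>i\<^sub>+\<^sub>1\<close>, which bounds its length. Conversely, by the
  Schroeder property all entries after the two smallest values of \<open>\<pi>(1), ..., \<pi>(i+1)\<close> that
  exceed both of them form an increasing subsequence, which has the required length.\<close>

lemma diagram_iff:
  fixes \<pi> :: "nat \<Rightarrow> nat"
  assumes "\<pi> permutes {1..n}"
  shows "(i, j) \<in> diagram n \<pi> \<longleftrightarrow>
    i \<in> {1..n} \<and> j \<in> {1..n} \<and> j < \<pi> i \<and> (\<forall>k\<in>{1..i}. \<pi> k \<noteq> j)"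
proof -
  have "i < inv \<pi> j \<longleftrightarrow> (\<forall>k\<in>{1..i}. \<pi> k \<noteq> j)" if "j \<in> {1..n}" for j
  proof -
    have "inv \<pi> j \<in> {1..n}"
      using that permutes_in_image[OF permutes_inv[OF assms]] by simp
    moreover have "\<pi> k = j \<longleftrightarrow> k = inv \<pi> j" for k
      using permutes_inv_eq[OF assms] by metis
    ultimately show ?thesis by (auto simp: not_less)
  qed
  then show ?thesis unfolding diagram_def by auto
qed

definition corners :: "(nat \<times> nat) set \<Rightarrow> (nat \<times> nat) set" where
  "corners D = {(i, j) \<in> D. (Suc i, j) \<notin> D \<and> (i, Suc j) \<notin> D}"

lemma essential_set_eq_corners: "essential_set n \<pi> = corners (diagram n \<pi>)"
  unfolding essential_set_def corners_def by simp

lemma rank_eq_0_iff: "rank \<pi> (i, j) = 0 \<longleftrightarrow> (\<forall>k. 1 \<le> k \<and> k < i \<longrightarrow> j \<le> \<pi> k)"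
proof -
  have "finite {k. 1 \<le> k \<and> k < i \<and> \<pi> k < j}"
    by (rule finite_subset[of _ "{..<i}"]) auto
  then show ?thesis unfolding rank_def by auto
qed

lemma rank_eq_1_iff:
  "rank \<pi> (i, j) = 1 \<longleftrightarrow>
    (\<exists>k0. 1 \<le> k0 \<and> k0 < i \<and> \<pi> k0 < j \<and> (\<forall>k. 1 \<le> k \<and> k < i \<and> \<pi> k < j \<longrightarrow> k = k0))"
proof -
  have "(\<exists>x. {k. 1 \<le> k \<and> k < i \<and> \<pi> k < j} = {x}) \<longleftrightarrow>
    (\<exists>k0. 1 \<le> k0 \<and> k0 < i \<and> \<pi> k0 < j \<and> (\<forall>k. 1 \<le> k \<and> k < i \<and> \<pi> k < j \<longrightarrow> k = k0))"
    by (simp add: set_eq_iff) blast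
  then show ?thesis unfolding rank_def One_nat_def card_1_singleton_iff fst_conv snd_conv .
qed

section \<open>Increasing subsequences\<close>

definition has_increasing :: "nat \<Rightarrow> (nat \<Rightarrow> nat) \<Rightarrow> nat \<Rightarrow> bool" where
  "has_increasing n \<pi> k \<longleftrightarrow> (\<exists>S\<subseteq>{1..n}. card S = k \<and> strict_mono_on S \<pi>)"

lemma contains_incr_pattern_iff: "contains_pattern n \<pi> (incr_pattern k) \<longleftrightarrow> has_increasing n \<pi> k"
proof
  assume "contains_pattern n \<pi> (incr_pattern k)"
  then obtain f where f_mono: "\<forall>a b. a < b \<and> b < k \<longrightarrow> f a < f b"
    and f_range: "\<forall>a<k. f a \<in> {1..n}"
    and f_order: "\<forall>a<k. \<forall>b<k. \<pi> (f a) < \<pi> (f b) \<longleftrightarrow> a < b"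
    unfolding contains_pattern_def incr_pattern_def by (simp del: upt_Suc) blast
  have "inj_on f {..<k}"
    by (rule inj_onI) (metis f_mono lessThan_iff nat_neq_iff)
  then show "has_increasing n \<pi> k" unfolding has_increasing_def
  proof (intro exI conjI)
    show "strict_mono_on (f ` {..<k}) \<pi>"
      using f_mono f_order
      by (intro strict_mono_onI) (metis imageE lessThan_iff nat_neq_iff order_less_asym)
  qed (use f_range card_image[OF \<open>inj_on f {..<k}\<close>] in auto)
next
  assume "has_increasing n \<pi> k"
  then obtain S where S: "S \<subseteq> {1..n}" "card S = k" "strict_mono_on S \<pi>"
    unfolding has_increasing_def by blast
  define xs where "xs = sorted_list_of_set S"
  have "finite S" using S(1) finite_subset by blast
  then have set_xs: "set xs = S" unfolding xs_def by simp
  have len: "length xs = k" using S(2) unfolding xs_def by simp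
  have mem: "a < k \<Longrightarrow> xs ! a \<in> S" for a
    using nth_mem[of a xs] len set_xs by simp
  have lt: "a < b \<Longrightarrow> b < k \<Longrightarrow> xs ! a < xs ! b" for a b
    using strict_sorted_list_of_set[of S] len sorted_wrt_nth_less unfolding xs_def by blast
  have L: "length [1..<k+1] = k" by (simp only: length_upt)
  show "contains_pattern n \<pi> (incr_pattern k)"
    unfolding contains_pattern_def incr_pattern_def L
  proof (intro exI[of _ "(!) xs"] conjI allI impI)
    fix a b assume "a < k" "b < k"
    then show "(\<pi> (xs ! a) < \<pi> (xs ! b)) = ([1..<k + 1] ! a < [1..<k + 1] ! b)"
      using lt mem strict_mono_onD[OF S(3)]
      by (simp del: upt_Suc) (metis nat_neq_iff order_less_asym)
  qed (use lt mem S(1) in fastforce)+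
qed

lemma has_increasingI:
  assumes "S \<subseteq> {1..n}" "k \<le> card S" "strict_mono_on S \<pi>"
  shows "has_increasing n \<pi> k"
proof -
  obtain T where "T \<subseteq> S" "card T = k"
    using obtain_subset_with_card_n[OF assms(2)] by metis
  then show ?thesis
    unfolding has_increasing_def using assms monotone_on_subset by (metis order_trans)
qed

lemma has_increasing_mono:
  assumes "has_increasing n \<pi> k" "j \<le> k"
  shows "has_increasing n \<pi> j"
proof -
  obtain S where "S \<subseteq> {1..n}" "card S = k" "strict_mono_on S \<pi>"
    using assms(1) unfolding has_increasing_def by blast
  then show ?thesis using has_increasingI[of S n j \<pi>] assms(2) by simp
qed

lemma strict_mono_on_insert_least:
  fixes f :: "'a::linorder \<Rightarrow> 'b::linorder"
  assumes "strict_mono_on T f" "\<forall>r\<in>T. a < r \<and> f a < f r"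
  shows "strict_mono_on (insert a T) f"
  using assms by (intro strict_mono_onI) (auto dest: strict_mono_onD)

lemma obtain_two_least:
  fixes S :: "'a::linorder set"
  assumes "finite S" "2 \<le> card S"
  obtains p1 p2 where "p1 \<in> S" "p2 \<in> S" "p1 < p2" "\<forall>r\<in>S - {p1}. p2 \<le> r" "\<forall>r\<in>S. p1 \<le> r"
proof -
  define p1 where "p1 = Min S"
  define p2 where "p2 = Min (S - {p1})"
  have "S \<noteq> {}" using assms by auto
  then have p1: "p1 \<in> S" "\<forall>r\<in>S. p1 \<le> r" unfolding p1_def using assms(1) by auto
  moreover have "card (S - {p1}) \<noteq> 0"
    using card_Diff_singleton[OF p1(1)] assms(2) by simp
  then have "S - {p1} \<noteq> {}" by (metis card.empty)
  then have p2: "p2 \<in> S - {p1}"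
    unfolding p2_def using assms(1) by (intro Min_in) auto
  moreover have "\<forall>r\<in>S - {p1}. p2 \<le> r"
    unfolding p2_def using assms(1) by simp
  moreover have "p1 < p2" using p1 p2 by (metis DiffE insertI1 order.not_eq_order_implies_strict)
  ultimately show ?thesis using that[of p1 p2] by blast
qed

lemma card_later_greater:
  fixes \<pi> :: "nat \<Rightarrow> nat"
  assumes "\<pi> permutes {1..n}" "i \<le> n" "t \<le> n"
  shows "card {r\<in>{i+1..n}. t < \<pi> r} + i = n - t + card {r\<in>{1..i}. \<pi> r \<le> t}"
proof -
  have "\<pi> ` {r\<in>{1..n}. t < \<pi> r} = {v\<in>\<pi> ` {1..n}. t < v}"
    by auto
  also have "\<dots> = {t+1..n}"
    using permutes_image[OF assms(1)] assms(3) by auto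
  finally have "\<pi> ` {r\<in>{1..n}. t < \<pi> r} = {t+1..n}" .
  then have "card {r\<in>{1..n}. t < \<pi> r} = n - t"
    using card_image[OF permutes_inj_on[OF assms(1)]]
    by (metis card_atLeastAtMost diff_Suc_Suc Suc_eq_plus1)
  moreover have "{r\<in>{1..n}. t < \<pi> r} = {r\<in>{1..i}. t < \<pi> r} \<union> {r\<in>{i+1..n}. t < \<pi> r}"
    using assms by auto
  then have "card {r\<in>{1..n}. t < \<pi> r} = card {r\<in>{1..i}. t < \<pi> r} + card {r\<in>{i+1..n}. t < \<pi> r}"
    by (simp add: card_Un_disjoint disjoint_iff)
  moreover have "{1..i} = {r\<in>{1..i}. t < \<pi> r} \<union> {r\<in>{1..i}. \<pi> r \<le> t}"
    by auto
  then have "i = card {r\<in>{1..i}. t < \<pi> r} + card {r\<in>{1..i}. \<pi> r \<le> t}"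
    by (metis (no_types, lifting) card_Un_disjoint card_atLeastAtMost diff_Suc_1 disjoint_iff
        finite_Un finite_atLeastAtMost leD mem_Collect_eq)
  ultimately show ?thesis by linarith
qed

section \<open>Schroeder permutations and the pattern 132\<close>

lemma less_4_iff: "(x::nat) < 4 \<longleftrightarrow> x = 0 \<or> x = 1 \<or> x = 2 \<or> x = 3"
  by auto

lemma contains_pattern_4I:
  fixes \<pi> :: "nat \<Rightarrow> nat"
  assumes "1 \<le> a" "a < b" "b < q" "q < r" "r \<le> n"
    and "\<forall>x<4. \<forall>y<4. (\<pi> ([a,b,q,r] ! x) < \<pi> ([a,b,q,r] ! y) \<longleftrightarrow> \<tau> ! x < \<tau> ! y)"
    and "length \<tau> = 4"
  shows "contains_pattern n \<pi> \<tau>"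
  unfolding contains_pattern_def
proof (intro exI[of _ "\<lambda>x. [a,b,q,r] ! x"] conjI allI impI)
  fix x y assume "x < y \<and> y < length \<tau>"
  then show "[a,b,q,r] ! x < [a,b,q,r] ! y" using assms(2-4,7) less_4_iff[of x] less_4_iff[of y]
    by auto
next
  fix x assume "x < length \<tau>"
  then show "[a,b,q,r] ! x \<in> {1..n}" using assms(1-5,7) by (auto simp: less_4_iff)
next
  fix x y assume "x < length \<tau>" "y < length \<tau>"
  then show "(\<pi> ([a,b,q,r] ! x) < \<pi> ([a,b,q,r] ! y)) = (\<tau> ! x < \<tau> ! y)"
    using assms(6,7) by auto
qed

lemma schroeder_if_avoids_132:
  fixes \<pi> :: "nat \<Rightarrow> nat"
  assumes "\<And>a b c. 1 \<le> a \<Longrightarrow> a < b \<Longrightarrow> b < c \<Longrightarrow> c \<le> n \<Longrightarrow> \<not> (\<pi> a < \<pi> c \<and> \<pi> c < \<pi> b)"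
  shows "schroeder n \<pi>"
proof -
  have "\<not> contains_pattern n \<pi> \<tau>" if "\<tau> = [1,2,4,3] \<or> \<tau> = [2,1,4,3]" for \<tau> :: "nat list"
  proof
    have len: "length \<tau> = 4" using that by auto
    assume "contains_pattern n \<pi> \<tau>"
    then obtain f where "\<forall>a b. a < b \<and> b < 4 \<longrightarrow> f a < f b" "\<forall>a < 4. f a \<in> {1..n}"
      and "\<forall>a < 4. \<forall>b < 4. \<pi> (f a) < \<pi> (f b) \<longleftrightarrow> \<tau> ! a < \<tau> ! b"
      unfolding contains_pattern_def len by blast
    \<comment> \<open>in both patterns the last three entries form a 132\<close>
    then show False
      using assms[of "f 1" "f 2" "f 3"] that by (auto simp: numeral_eq_Suc)
  qed
  then show ?thesis unfolding schroeder_def avoids_def by blast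
qed

section \<open>Dominant permutations\<close>

definition young_diagram :: "nat \<Rightarrow> (nat \<Rightarrow> nat) \<Rightarrow> (nat \<times> nat) set" where
  "young_diagram n l = {(i, j). i \<in> {1..n} \<and> 1 \<le> j \<and> j \<le> l i}"

lemma young_diagram_eq_imp_eq:
  assumes "young_diagram n l1 = young_diagram n l2" "i \<in> {1..n}"
  shows "l1 i = l2 i"
proof -
  have *: "j \<le> l1 i \<longleftrightarrow> j \<le> l2 i" if "1 \<le> j" for j
    using assms that unfolding young_diagram_def by blast
  show ?thesis
    using *[of "l1 i"] *[of "l2 i"] by linarith
qed

text \<open>The permutation whose diagram is \<open>young_diagram n l\<close>, filled in greedily row by row.\<close>

fun dominant_image :: "nat \<Rightarrow> (nat \<Rightarrow> nat) \<Rightarrow> nat \<Rightarrow> nat set" where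
  "dominant_image n l 0 = {}"
| "dominant_image n l (Suc i) =
    insert (Min ({l (Suc i) + 1..n} - dominant_image n l i)) (dominant_image n l i)"

definition dominant_perm :: "nat \<Rightarrow> (nat \<Rightarrow> nat) \<Rightarrow> nat \<Rightarrow> nat" where
  "dominant_perm n l i =
    (if i \<in> {1..n} then Min ({l i + 1..n} - dominant_image n l (i - 1)) else i)"

locale staircase_shape =
  fixes n :: nat and l :: "nat \<Rightarrow> nat"
  assumes shape_Suc_le: "\<And>i. 1 \<le> i \<Longrightarrow> Suc i \<le> n \<Longrightarrow> l (Suc i) \<le> l i"
    and shape_bound: "\<And>i. 1 \<le> i \<Longrightarrow> i \<le> n \<Longrightarrow> l i + i \<le> n"
begin

abbreviation \<sigma> where "\<sigma> \<equiv> dominant_perm n l"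

lemma shape_antimono:
  assumes "1 \<le> k" "k \<le> i" "i \<le> n"
  shows "l i \<le> l k"
  using assms(2,3)
proof (induction i rule: dec_induct)
  case (step i)
  then show ?case using shape_Suc_le[of i] assms(1) by simp
qed simp

lemma dominant_image_eq: "i \<le> n \<Longrightarrow> dominant_image n l i = \<sigma> ` {1..i}"
proof (induction i)
  case (Suc i)
  have "\<sigma> (Suc i) = Min ({l (Suc i) + 1..n} - dominant_image n l i)"
    using Suc.prems by (simp add: dominant_perm_def)
  moreover have "{1..Suc i} = insert (Suc i) {1..i}" by auto
  ultimately show ?case using Suc by simp
qed simp

lemma dominant_perm_eq_Min:
  assumes "i \<in> {1..n}"
  shows "\<sigma> i = Min ({l i + 1..n} - \<sigma> ` {1..i - 1})"
proof -
  have "\<sigma> i = Min ({l i + 1..n} - dominant_image n l (i - 1))"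
    using assms by (simp add: dominant_perm_def)
  moreover have "dominant_image n l (i - 1) = \<sigma> ` {1..i - 1}"
    using assms by (intro dominant_image_eq) auto
  ultimately show ?thesis by simp
qed

lemma dominant_free_values_nonempty:
  assumes "i \<in> {1..n}"
  shows "{l i + 1..n} - \<sigma> ` {1..i - 1} \<noteq> {}"
proof
  assume "{l i + 1..n} - \<sigma> ` {1..i - 1} = {}"
  then have "card {l i + 1..n} \<le> card (\<sigma> ` {1..i - 1})"
    by (intro card_mono) auto
  also have "\<dots> \<le> i - 1"
    using card_image_le[of "{1..i - 1}" \<sigma>] by simp
  finally show False using shape_bound[of i] assms by simp
qed

lemma dominant_perm_free:
  assumes "i \<in> {1..n}"
  shows "\<sigma> i \<in> {l i + 1..n} - \<sigma> ` {1..i - 1}"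
  unfolding dominant_perm_eq_Min[OF assms]
  using dominant_free_values_nonempty[OF assms] by (intro Min_in) auto

lemma dominant_perm_least:
  assumes "i \<in> {1..n}" "v \<in> {l i + 1..n}" "v \<notin> \<sigma> ` {1..i - 1}"
  shows "\<sigma> i \<le> v"
  unfolding dominant_perm_eq_Min[OF assms(1)] using assms(2,3) by (intro Min_le) auto

lemma shape_less_dominant_perm: "i \<in> {1..n} \<Longrightarrow> l i < \<sigma> i"
  using dominant_perm_free by fastforce

lemma dominant_perm_permutes: "\<sigma> permutes {1..n}"
proof (rule bij_imp_permutes)
  have inj: "inj_on \<sigma> {1..n}"
  proof (rule inj_onI, rule ccontr)
    fix x y assume "x \<in> {1..n}" "y \<in> {1..n}" "\<sigma> x = \<sigma> y" "x \<noteq> y"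
    moreover have "\<sigma> a \<noteq> \<sigma> b" if "a \<in> {1..n}" "b \<in> {1..n}" "a < b" for a b
    proof -
      have "\<sigma> a \<in> \<sigma> ` {1..b - 1}" using that by auto
      then show ?thesis using dominant_perm_free[OF that(2)] by auto
    qed
    ultimately show False by (metis nat_neq_iff)
  qed
  moreover have "\<sigma> ` {1..n} \<subseteq> {1..n}"
    using dominant_perm_free by fastforce
  ultimately show "bij_betw \<sigma> {1..n} {1..n}"
    using endo_inj_surj[of "{1..n}" \<sigma>] by (simp add: bij_betw_def)
qed (auto simp: dominant_perm_def)

lemma diagram_dominant_perm: "diagram n \<sigma> = young_diagram n l"
proof (intro set_eqI iffI)
  fix x assume "x \<in> diagram n \<sigma>"
  then obtain i j where x: "x = (i, j)" and i: "i \<in> {1..n}" and j: "j \<in> {1..n}"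
    and j_less: "j < \<sigma> i" and free: "\<forall>k\<in>{1..i}. \<sigma> k \<noteq> j"
    using diagram_iff[OF dominant_perm_permutes] by (cases x) auto
  have "j \<le> l i"
  proof (rule ccontr)
    assume "\<not> j \<le> l i"
    then have "\<sigma> i \<le> j"
      using free j by (intro dominant_perm_least[OF i]) auto
    then show False using j_less by simp
  qed
  then show "x \<in> young_diagram n l" unfolding young_diagram_def using x i j by simp
next
  fix x assume "x \<in> young_diagram n l"
  then obtain i j where x: "x = (i, j)" and i: "i \<in> {1..n}" and j: "1 \<le> j" "j \<le> l i"
    unfolding young_diagram_def by blast
  have "l i < \<sigma> k" if "k \<in> {1..i}" for k
    using shape_antimono[of k i] shape_less_dominant_perm[of k] that i by fastforce
  then show "x \<in> diagram n \<sigma>"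
    using diagram_iff[OF dominant_perm_permutes] x i j shape_bound[of i] by fastforce
qed

lemma essential_set_dominant_perm: "essential_set n \<sigma> = corners (young_diagram n l)"
  unfolding essential_set_eq_corners diagram_dominant_perm ..

lemma rank_dominant_perm:
  assumes "e \<in> essential_set n \<sigma>"
  shows "rank \<sigma> e = 0"
proof -
  obtain a b where e: "e = (a, b)" "a \<in> {1..n}" "b \<le> l a"
    using assms unfolding essential_set_dominant_perm corners_def young_diagram_def by blast
  have "l a < \<sigma> k" if "1 \<le> k" "k < a" for k
    using shape_antimono[of k a] shape_less_dominant_perm[of k] that e by fastforce
  then show ?thesis unfolding e(1) rank_eq_0_iff using e(3) by fastforce
qed

text \<open>A 132 pattern at positions \<open>a < b < c\<close> would put \<open>(b, \<sigma> c)\<close> into the diagram,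
  i.e. under the shape, although \<open>\<sigma> c > \<sigma> a > l a \<ge> l b\<close>.\<close>

lemma dominant_perm_avoids_132:
  assumes "1 \<le> a" "a < b" "b < c" "c \<le> n"
  shows "\<not> (\<sigma> a < \<sigma> c \<and> \<sigma> c < \<sigma> b)"
proof
  assume "\<sigma> a < \<sigma> c \<and> \<sigma> c < \<sigma> b"
  moreover have "\<sigma> k \<noteq> \<sigma> c" if "k \<in> {1..b}" for k
    using permutes_inj[OF dominant_perm_permutes] that assms
    by (metis atLeastAtMost_iff injD not_le)
  moreover have "\<sigma> c \<in> {1..n}"
    using permutes_in_image[OF dominant_perm_permutes] assms by simp
  ultimately have "(b, \<sigma> c) \<in> young_diagram n l"
    using assms diagram_iff[OF dominant_perm_permutes] diagram_dominant_perm by auto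
  then have "\<sigma> c \<le> l a"
    using shape_antimono[of a b] assms unfolding young_diagram_def by auto
  then show False
    using shape_less_dominant_perm[of a] \<open>\<sigma> a < \<sigma> c \<and> \<sigma> c < \<sigma> b\<close> assms by simp
qed

lemma dominant_perm_schroeder: "schroeder n \<sigma>"
  by (rule schroeder_if_avoids_132, rule dominant_perm_avoids_132)

end

lemma perm_eq_if_diagram_eq:
  fixes \<sigma>1 \<sigma>2 :: "nat \<Rightarrow> nat"
  assumes p1: "\<sigma>1 permutes {1..n}" and p2: "\<sigma>2 permutes {1..n}"
    and D: "diagram n \<sigma>1 = diagram n \<sigma>2"
  shows "\<sigma>1 = \<sigma>2"
proof -
  \<comment> \<open>in the first row where they differ, the smaller value marks a square of the other diagram\<close>
  have not_less: "\<not> \<tau>1 i < \<tau>2 i"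
    if "\<tau>1 permutes {1..n}" "\<tau>2 permutes {1..n}" "diagram n \<tau>1 = diagram n \<tau>2"
      "i \<in> {1..n}" "\<forall>k\<in>{1..<i}. \<tau>1 k = \<tau>2 k" for \<tau>1 \<tau>2 :: "nat \<Rightarrow> nat" and i
  proof
    assume less: "\<tau>1 i < \<tau>2 i"
    have "\<tau>2 k \<noteq> \<tau>1 i" if "k \<in> {1..i}" for k
    proof (cases "k = i")
      case False
      then have "\<tau>1 k \<noteq> \<tau>1 i" using permutes_inj[OF \<open>\<tau>1 permutes {1..n}\<close>] by (auto dest: injD)
      then show ?thesis using \<open>\<forall>k\<in>{1..<i}. \<tau>1 k = \<tau>2 k\<close> that False by auto
    qed (use less in simp)
    moreover have "\<tau>1 i \<in> {1..n}" using permutes_in_image[OF that(1)] that(4) by simp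
    ultimately have "(i, \<tau>1 i) \<in> diagram n \<tau>2"
      unfolding diagram_iff[OF that(2)] using that(4) less by blast
    then show False unfolding that(3)[symmetric] diagram_iff[OF that(1)] by simp
  qed
  have agree: "i \<in> {1..n} \<longrightarrow> \<sigma>1 i = \<sigma>2 i" for i
  proof (induction i rule: less_induct)
    case (less i)
    show ?case
    proof
      assume i: "i \<in> {1..n}"
      then have "\<forall>k\<in>{1..<i}. \<sigma>1 k = \<sigma>2 k" "\<forall>k\<in>{1..<i}. \<sigma>2 k = \<sigma>1 k"
        using less.IH by auto
      then show "\<sigma>1 i = \<sigma>2 i"
        using not_less[OF p1 p2 D i] not_less[OF p2 p1 D[symmetric] i] by simp
    qed
  qed
  show ?thesis
  proof
    fix x show "\<sigma>1 x = \<sigma>2 x"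
      using agree[of x] permutes_not_in[OF p1, of x] permutes_not_in[OF p2, of x]
      by (cases "x \<in> {1..n}") auto
  qed
qed

lemma essential_set_covers_diagram:
  fixes \<sigma> :: "nat \<Rightarrow> nat"
  assumes "\<sigma> permutes {1..n}" "(i, j) \<in> diagram n \<sigma>"
  shows "\<exists>a b. (a, b) \<in> essential_set n \<sigma> \<and> i \<le> a \<and> j \<le> b"
  using assms(2)
proof (induction "2 * n - i - j" arbitrary: i j rule: less_induct)
  case less
  show ?case
  proof (cases "(i, j) \<in> essential_set n \<sigma>")
    case False
    have "i \<le> n" "j \<le> n" using less.prems diagram_iff[OF assms(1)] by auto
    moreover have "(Suc i, j) \<in> diagram n \<sigma> \<or> (i, Suc j) \<in> diagram n \<sigma>"
      using False less.prems unfolding essential_set_def by auto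
    moreover have "Suc i \<le> n" if "(Suc i, j) \<in> diagram n \<sigma>"
      using that diagram_iff[OF assms(1)] by auto
    moreover have "Suc j \<le> n" if "(i, Suc j) \<in> diagram n \<sigma>"
      using that diagram_iff[OF assms(1)] by auto
    ultimately show ?thesis
      using less.hyps[of "Suc i" j] less.hyps[of i "Suc j"] by (fastforce dest: Suc_leD)
  qed blast
qed

lemma diagram_eq_below_essential:
  fixes \<sigma> :: "nat \<Rightarrow> nat"
  assumes p: "\<sigma> permutes {1..n}" and rank0: "\<forall>e\<in>essential_set n \<sigma>. rank \<sigma> e = 0"
  shows "diagram n \<sigma> =
    {(i, j). 1 \<le> i \<and> 1 \<le> j \<and> (\<exists>a b. (a, b) \<in> essential_set n \<sigma> \<and> i \<le> a \<and> j \<le> b)}"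
proof (intro set_eqI iffI)
  fix x assume x: "x \<in> diagram n \<sigma>"
  obtain i j where "x = (i, j)" by (cases x)
  then show "x \<in> {(i, j). 1 \<le> i \<and> 1 \<le> j \<and> (\<exists>a b. (a, b) \<in> essential_set n \<sigma> \<and> i \<le> a \<and> j \<le> b)}"
    using essential_set_covers_diagram[OF p, of i j] x diagram_iff[OF p, of i j] by auto
next
  fix x assume "x \<in> {(i, j). 1 \<le> i \<and> 1 \<le> j \<and> (\<exists>a b. (a, b) \<in> essential_set n \<sigma> \<and> i \<le> a \<and> j \<le> b)}"
  then obtain i j a b where x: "x = (i, j)" "1 \<le> i" "1 \<le> j" "i \<le> a" "j \<le> b"
    and ess: "(a, b) \<in> essential_set n \<sigma>" by blast
  then have ab: "a \<in> {1..n}" "b \<in> {1..n}" "b < \<sigma> a" "\<forall>k\<in>{1..a}. \<sigma> k \<noteq> b"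
    using diagram_iff[OF p] unfolding essential_set_def by auto
  have rank0_ab: "\<forall>k. 1 \<le> k \<and> k < a \<longrightarrow> b \<le> \<sigma> k"
    using rank0 ess rank_eq_0_iff by blast
  have less: "j < \<sigma> k" if "k \<in> {1..i}" for k
  proof (cases "k = a")
    case False
    then have "b \<le> \<sigma> k" "\<sigma> k \<noteq> b"
      using rank0_ab ab(4) that x(4) by auto
    then show ?thesis using x(5) by simp
  qed (use ab x(5) in simp)
  show "x \<in> diagram n \<sigma>"
    unfolding x(1) diagram_iff[OF p]
  proof (intro conjI ballI)
    show "i \<in> {1..n}" "j \<in> {1..n}" using x ab by auto
    show "j < \<sigma> i" using less[of i] x by simp
  next
    fix k assume "k \<in> {1..i}"
    then show "\<sigma> k \<noteq> j" using less[of k] by simp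
  qed
qed

lemma perm_eq_if_essential_set_eq:
  fixes \<sigma>1 \<sigma>2 :: "nat \<Rightarrow> nat"
  assumes "\<sigma>1 permutes {1..n}" "\<sigma>2 permutes {1..n}"
    and "essential_set n \<sigma>1 = essential_set n \<sigma>2"
    and "\<forall>e\<in>essential_set n \<sigma>1. rank \<sigma>1 e = 0" "\<forall>e\<in>essential_set n \<sigma>2. rank \<sigma>2 e = 0"
  shows "\<sigma>1 = \<sigma>2"
proof (rule perm_eq_if_diagram_eq[OF assms(1,2)])
  show "diagram n \<sigma>1 = diagram n \<sigma>2"
    unfolding diagram_eq_below_essential[OF assms(1,4)] diagram_eq_below_essential[OF assms(2,5)]
      assms(3) ..
qed

lemma phi_eqI:
  assumes "\<sigma> permutes {1..n}" "essential_set n \<sigma> = essential_star n \<pi>"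
    and "\<forall>e\<in>essential_set n \<sigma>. rank \<sigma> e = 0"
  shows "phi n \<pi> = \<sigma>"
  unfolding phi_def
proof (rule the_equality)
  fix \<tau> assume "\<tau> permutes {1..n} \<and> essential_set n \<tau> = essential_star n \<pi> \<and>
    (\<forall>e\<in>essential_set n \<tau>. rank \<tau> e = 0)"
  then show "\<tau> = \<sigma>"
    using perm_eq_if_essential_set_eq[of \<tau> n \<sigma>] assms by simp
qed (use assms in simp)

lemma phi_eq_self:
  assumes "\<sigma> permutes {1..n}" "\<forall>e\<in>essential_set n \<sigma>. rank \<sigma> e = 0"
  shows "phi n \<sigma> = \<sigma>"
proof (rule phi_eqI[OF assms(1) _ assms(2)])
  have rank_ne_1: "{e \<in> essential_set n \<sigma>. rank \<sigma> e \<noteq> 1} = essential_set n \<sigma>"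
    using assms(2) by auto
  have no_rank_1: "{(i - 1, j - 1) | i j. (i, j) \<in> essential_set n \<sigma> \<and> rank \<sigma> (i, j) = 1} = {}"
    using assms(2) by fastforce
  show "essential_set n \<sigma> = essential_star n \<sigma>"
    unfolding essential_star_def rank_ne_1 no_rank_1 by simp
qed

section \<open>Prefix minima\<close>

locale nat_perm =
  fixes n :: nat and \<pi> :: "nat \<Rightarrow> nat"
  assumes perm: "\<pi> permutes {1..n}"
begin

definition pmin :: "nat \<Rightarrow> nat" where "pmin i = Min (\<pi> ` {1..i})"
definition pmin2 :: "nat \<Rightarrow> nat" where "pmin2 i = Min (\<pi> ` {1..i} - {pmin i})"

lemma perm_inj: "\<pi> x = \<pi> y \<Longrightarrow> x = y"
  using permutes_inj[OF perm] by (rule injD)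

lemma perm_in: "k \<in> {1..n} \<Longrightarrow> \<pi> k \<in> {1..n}"
  using permutes_in_image[OF perm] by blast

lemma perm_pos: "1 \<le> k \<Longrightarrow> 1 \<le> \<pi> k"
  using perm_in[of k] permutes_not_in[OF perm, of k] by (cases "k \<le> n") auto

lemma in_diagram_iff:
  "(i, j) \<in> diagram n \<pi> \<longleftrightarrow> i \<in> {1..n} \<and> j \<in> {1..n} \<and> j < \<pi> i \<and> (\<forall>k\<in>{1..i}. \<pi> k \<noteq> j)"
  using diagram_iff[OF perm] .

lemma pmin_le: "k \<in> {1..i} \<Longrightarrow> pmin i \<le> \<pi> k"
  unfolding pmin_def by (rule Min_le) auto

lemma obtain_pmin_pos:
  assumes "1 \<le> i"
  obtains p where "p \<in> {1..i}" "\<pi> p = pmin i"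
proof -
  have "pmin i \<in> \<pi> ` {1..i}" unfolding pmin_def using assms by (intro Min_in) auto
  then obtain p where "p \<in> {1..i}" "pmin i = \<pi> p" by (rule imageE)
  then show ?thesis using that by simp
qed

lemma pmin_pos:
  assumes "1 \<le> i"
  shows "1 \<le> pmin i"
proof -
  obtain p where "p \<in> {1..i}" "\<pi> p = pmin i" using obtain_pmin_pos[OF assms] .
  then show ?thesis using perm_pos[of p] by simp
qed

lemma pmin_le_n:
  assumes "1 \<le> i" "i \<le> n"
  shows "pmin i \<le> n"
proof -
  obtain p where "p \<in> {1..i}" "\<pi> p = pmin i" using obtain_pmin_pos[OF assms(1)] .
  then show ?thesis using perm_in[of p] assms(2) by simp
qed

lemma pmin2_le: "2 \<le> i \<Longrightarrow> k \<in> {1..i} \<Longrightarrow> \<pi> k \<noteq> pmin i \<Longrightarrow> pmin2 i \<le> \<pi> k"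
  unfolding pmin2_def by (rule Min_le) auto

lemma obtain_pmin2_pos:
  assumes "2 \<le> i"
  obtains q where "q \<in> {1..i}" "\<pi> q = pmin2 i" "\<pi> q \<noteq> pmin i"
proof -
  have "\<pi> ` {1..i} - {pmin i} \<noteq> {}"
  proof
    assume empty: "\<pi> ` {1..i} - {pmin i} = {}"
    have "\<pi> 1 \<in> \<pi> ` {1..i}" "\<pi> 2 \<in> \<pi> ` {1..i}" using assms by auto
    then have "\<pi> 1 = pmin i" "\<pi> 2 = pmin i" using empty by blast+
    then show False using perm_inj[of 1 2] by simp
  qed
  then have "pmin2 i \<in> \<pi> ` {1..i} - {pmin i}" unfolding pmin2_def by (intro Min_in) auto
  then obtain q where "q \<in> {1..i}" "pmin2 i = \<pi> q" "pmin2 i \<noteq> pmin i" by (auto elim: imageE)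
  then show ?thesis using that by simp
qed

lemma pmin_less_pmin2:
  assumes "2 \<le> i"
  shows "pmin i < pmin2 i"
proof -
  obtain q where "q \<in> {1..i}" "\<pi> q = pmin2 i" "\<pi> q \<noteq> pmin i" using obtain_pmin2_pos[OF assms] .
  then show ?thesis using pmin_le[of q i] by simp
qed

lemma pmin2_le_n:
  assumes "2 \<le> i" "i \<le> n"
  shows "pmin2 i \<le> n"
proof -
  obtain q where "q \<in> {1..i}" "\<pi> q = pmin2 i" using obtain_pmin2_pos[OF assms(1)] .
  then show ?thesis using perm_in[of q] assms(2) by simp
qed

lemma card_le_pmin:
  assumes "1 \<le> i"
  shows "card {r\<in>{1..i}. \<pi> r \<le> pmin i} = 1"
proof -
  obtain p where p: "p \<in> {1..i}" "\<pi> p = pmin i" using obtain_pmin_pos[OF assms] .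
  have "{r\<in>{1..i}. \<pi> r \<le> pmin i} = {p}"
  proof (intro set_eqI iffI)
    fix r assume "r \<in> {r\<in>{1..i}. \<pi> r \<le> pmin i}"
    then have "\<pi> r = \<pi> p" using pmin_le[of r i] p(2) by simp
    then show "r \<in> {p}" using perm_inj by simp
  qed (use p in simp)
  then show ?thesis by simp
qed

lemma card_le_pmin2:
  assumes "2 \<le> i"
  shows "card {r\<in>{1..i}. \<pi> r \<le> pmin2 i} = 2"
proof -
  obtain p where p: "p \<in> {1..i}" "\<pi> p = pmin i" using obtain_pmin_pos[of i] assms by auto
  obtain q where q: "q \<in> {1..i}" "\<pi> q = pmin2 i" "\<pi> q \<noteq> pmin i" using obtain_pmin2_pos[OF assms] .
  have "{r\<in>{1..i}. \<pi> r \<le> pmin2 i} = {p, q}"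
  proof (intro set_eqI iffI)
    fix r assume "r \<in> {r\<in>{1..i}. \<pi> r \<le> pmin2 i}"
    then have r: "r \<in> {1..i}" "\<pi> r \<le> pmin2 i" by auto
    have "\<pi> r = \<pi> p \<or> \<pi> r = \<pi> q"
    proof (cases "\<pi> r = pmin i")
      case False
      then show ?thesis using pmin2_le[OF assms r(1)] r(2) q(2) by simp
    qed (use p in simp)
    then show "r \<in> {p, q}" using perm_inj[of r p] perm_inj[of r q] by blast
  qed (use p q pmin_less_pmin2[OF assms] in auto)
  moreover have "p \<noteq> q" using p q by auto
  ultimately show ?thesis by simp
qed

lemma card_greater_pmin:
  assumes "1 \<le> i" "i \<le> n" "T \<subseteq> {i+1..n}" "\<forall>r\<in>T. pmin i < \<pi> r"
  shows "card T + i + pmin i \<le> n + 1"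
proof -
  have "card T \<le> card {r\<in>{i+1..n}. pmin i < \<pi> r}" using assms(3,4) by (intro card_mono) auto
  then show ?thesis
    using card_later_greater[OF perm assms(2) pmin_le_n[OF assms(1,2)]] card_le_pmin[OF assms(1)]
      pmin_le_n[OF assms(1,2)] by linarith
qed

lemma card_greater_pmin2:
  assumes "2 \<le> i" "i \<le> n" "T \<subseteq> {i+1..n}" "\<forall>r\<in>T. pmin2 i < \<pi> r"
  shows "card T + i + pmin2 i \<le> n + 2"
proof -
  have "card T \<le> card {r\<in>{i+1..n}. pmin2 i < \<pi> r}" using assms(3,4) by (intro card_mono) auto
  then show ?thesis
    using card_later_greater[OF perm assms(2) pmin2_le_n[OF assms(1,2)]] card_le_pmin2[OF assms(1)]
      pmin2_le_n[OF assms(1,2)] by linarith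
qed

lemma pmin_Suc: "1 \<le> i \<Longrightarrow> pmin (Suc i) = min (\<pi> (Suc i)) (pmin i)"
  unfolding pmin_def by (simp add: atLeastAtMostSuc_conv image_insert Min_insert)

lemma perm_Suc_notin_prefix: "\<pi> (Suc i) \<notin> \<pi> ` {1..i}"
proof
  assume "\<pi> (Suc i) \<in> \<pi> ` {1..i}"
  then obtain k where "k \<in> {1..i}" "\<pi> (Suc i) = \<pi> k" by blast
  then show False using perm_inj[of "Suc i" k] by simp
qed

lemma perm_Suc_ne_pmin:
  assumes "1 \<le> i"
  shows "\<pi> (Suc i) \<noteq> pmin i"
proof
  obtain p where "p \<in> {1..i}" "\<pi> p = pmin i" using obtain_pmin_pos[OF assms] .
  moreover assume "\<pi> (Suc i) = pmin i"
  ultimately show False using perm_inj[of "Suc i" p] by simp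
qed

lemma pmin2_Suc_less:
  assumes "1 \<le> i" "\<pi> (Suc i) < pmin i"
  shows "pmin2 (Suc i) = pmin i" "pmin (Suc i) = \<pi> (Suc i)"
proof -
  show m: "pmin (Suc i) = \<pi> (Suc i)" using pmin_Suc assms by simp
  have "\<pi> ` {1..Suc i} - {\<pi> (Suc i)} = \<pi> ` {1..i}"
    using perm_Suc_notin_prefix[of i] by (auto simp: atLeastAtMostSuc_conv)
  then show "pmin2 (Suc i) = pmin i" by (simp add: pmin2_def m pmin_def[of i])
qed

lemma pmin2_Suc_greater:
  assumes "1 \<le> i" "pmin i < \<pi> (Suc i)"
  shows "pmin (Suc i) = pmin i"
    and "pmin2 (Suc i) = (if i = 1 then \<pi> (Suc i) else min (\<pi> (Suc i)) (pmin2 i))"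
proof -
  show m: "pmin (Suc i) = pmin i" using pmin_Suc assms by simp
  have split: "\<pi> ` {1..Suc i} - {pmin (Suc i)} = insert (\<pi> (Suc i)) (\<pi> ` {1..i} - {pmin i})"
    unfolding m using assms(2) by (auto simp: atLeastAtMostSuc_conv)
  show "pmin2 (Suc i) = (if i = 1 then \<pi> (Suc i) else min (\<pi> (Suc i)) (pmin2 i))"
  proof (cases "i = 1")
    case True
    then have "\<pi> ` {1..i} - {pmin i} = {}" unfolding pmin_def by auto
    then show ?thesis unfolding pmin2_def split using True by simp
  next
    case False
    then obtain q where "q \<in> {1..i}" "\<pi> q \<noteq> pmin i"
      using obtain_pmin2_pos[of i] assms(1) by force
    then have "\<pi> ` {1..i} - {pmin i} \<noteq> {}" by blast
    then show ?thesis unfolding pmin2_def split using False by (simp add: Min_insert pmin2_def)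
  qed
qed

lemma pmin2_Suc_le: "2 \<le> i \<Longrightarrow> pmin2 (Suc i) \<le> pmin2 i"
  using pmin2_Suc_less[of i] pmin2_Suc_greater[of i] pmin_less_pmin2[of i] perm_Suc_ne_pmin[of i]
  by (cases "\<pi> (Suc i) < pmin i") auto

lemma pmin2_Suc_less_iff: "2 \<le> i \<Longrightarrow> pmin2 (Suc i) < pmin2 i \<longleftrightarrow> \<pi> (Suc i) < pmin2 i"
  using pmin2_Suc_less[of i] pmin2_Suc_greater[of i] pmin_less_pmin2[of i] perm_Suc_ne_pmin[of i]
  by (cases "\<pi> (Suc i) < pmin i") auto

lemma pmin2_n:
  assumes "2 \<le> n"
  shows "pmin2 n = 2"
proof -
  have "pmin n = 1" unfolding pmin_def permutes_image[OF perm] using assms by (intro Min_eqI) auto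
  moreover have "{1..n} - {1::nat} = {2..n}" by auto
  ultimately show ?thesis
    unfolding pmin2_def permutes_image[OF perm] using assms by (intro Min_eqI) auto
qed

lemma essential_set_iff:
  "(i, j) \<in> essential_set n \<pi> \<longleftrightarrow>
    (i, j) \<in> diagram n \<pi> \<and> i < n \<and> \<pi> (Suc i) \<le> j \<and> Suc j \<in> \<pi> ` {1..i}"
proof (cases "(i, j) \<in> diagram n \<pi>")
  case True
  then have D: "i \<in> {1..n}" "j \<in> {1..n}" "j < \<pi> i" and free: "\<forall>k\<in>{1..i}. \<pi> k \<noteq> j"
    by (auto simp: in_diagram_iff)
  have "j \<in> \<pi> ` {1..n}" using D(2) permutes_image[OF perm] by simp
  then obtain r where r: "r \<in> {1..n}" "j = \<pi> r" by (rule imageE)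
  have "\<not> r \<le> i" using free r by auto
  then have i: "i < n" using r by simp
  \<comment> \<open>the value \<open>j\<close> has not occurred in rows \<open>1..i\<close>, so only the dot of row \<open>i + 1\<close> can cut the
    square below, and only a dot in rows \<open>1..i\<close> can cut the square to the right\<close>
  have below: "(Suc i, j) \<in> diagram n \<pi> \<longleftrightarrow> j < \<pi> (Suc i)"
    using D free i unfolding in_diagram_iff by (auto simp: atLeastAtMostSuc_conv)
  have right: "(i, Suc j) \<in> diagram n \<pi> \<longleftrightarrow> Suc j \<notin> \<pi> ` {1..i}"
  proof
    assume notin: "Suc j \<notin> \<pi> ` {1..i}"
    moreover have "\<pi> i \<in> \<pi> ` {1..i}" using D(1) by simp
    ultimately have "\<pi> i \<noteq> Suc j" by metis
    then show "(i, Suc j) \<in> diagram n \<pi>"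
      unfolding in_diagram_iff using D notin perm_in[of i] by (force simp: image_iff)
  qed (auto simp: in_diagram_iff)
  show ?thesis unfolding essential_set_def using True below right i by auto
next
  case False
  then show ?thesis unfolding essential_set_def by auto
qed

lemma essential_rank_0_iff:
  "(i, j) \<in> essential_set n \<pi> \<and> rank \<pi> (i, j) = 0 \<longleftrightarrow>
    1 \<le> i \<and> i < n \<and> j = pmin i - 1 \<and> 2 \<le> pmin i \<and> \<pi> (Suc i) < pmin i"
proof
  assume "(i, j) \<in> essential_set n \<pi> \<and> rank \<pi> (i, j) = 0"
  then have D: "i \<in> {1..n}" "j \<in> {1..n}" "j < \<pi> i" "\<forall>k\<in>{1..i}. \<pi> k \<noteq> j"
    and i: "i < n" and below: "\<pi> (Suc i) \<le> j" and right: "Suc j \<in> \<pi> ` {1..i}"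
    and r0: "\<forall>k. 1 \<le> k \<and> k < i \<longrightarrow> j \<le> \<pi> k"
    unfolding essential_set_iff in_diagram_iff rank_eq_0_iff by auto
  have gt: "j < \<pi> k" if "k \<in> {1..i}" for k
  proof (cases "k = i")
    case False
    then show ?thesis
      using r0 D(4) that by (metis atLeastAtMost_iff le_neq_implies_less order_le_less)
  qed (use D in simp)
  obtain p where "p \<in> {1..i}" "\<pi> p = pmin i" using obtain_pmin_pos D(1) by auto
  then have "j < pmin i" using gt[of p] by simp
  moreover have "pmin i \<le> Suc j" using right pmin_le by auto
  ultimately show "1 \<le> i \<and> i < n \<and> j = pmin i - 1 \<and> 2 \<le> pmin i \<and> \<pi> (Suc i) < pmin i"
    using D i below by auto
next
  assume "1 \<le> i \<and> i < n \<and> j = pmin i - 1 \<and> 2 \<le> pmin i \<and> \<pi> (Suc i) < pmin i"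
  then have i: "1 \<le> i" "i < n" and j: "Suc j = pmin i" "1 \<le> j" and below: "\<pi> (Suc i) \<le> j"
    by auto
  have gt: "j < \<pi> k" if "k \<in> {1..i}" for k using pmin_le[OF that] j by simp
  obtain p where "p \<in> {1..i}" "\<pi> p = pmin i" using obtain_pmin_pos[OF i(1)] .
  then have "Suc j \<in> \<pi> ` {1..i}" using j by force
  moreover have "(i, j) \<in> diagram n \<pi>"
    unfolding in_diagram_iff using gt[of i] gt i j pmin_le_n[of i] by fastforce
  moreover have "rank \<pi> (i, j) = 0" unfolding rank_eq_0_iff using gt by (simp add: less_imp_le)
  ultimately show "(i, j) \<in> essential_set n \<pi> \<and> rank \<pi> (i, j) = 0"
    unfolding essential_set_iff using i below by simp
qed

lemma essential_rank_1_imp: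
  assumes "(i, j) \<in> essential_set n \<pi>" "rank \<pi> (i, j) = 1"
  shows "2 \<le> i \<and> i < n \<and> j = pmin2 i - 1 \<and> \<pi> i \<noteq> pmin i \<and> pmin i + 1 < pmin2 i
    \<and> \<pi> (Suc i) < pmin2 i"
proof -
  have D: "i \<in> {1..n}" "j < \<pi> i" "\<forall>k\<in>{1..i}. \<pi> k \<noteq> j"
    and i: "i < n" and below: "\<pi> (Suc i) \<le> j" and right: "Suc j \<in> \<pi> ` {1..i}"
    using assms(1) unfolding essential_set_iff in_diagram_iff by auto
  obtain k0 where k0: "1 \<le> k0" "k0 < i" "\<pi> k0 < j"
    and unique: "\<forall>k. 1 \<le> k \<and> k < i \<and> \<pi> k < j \<longrightarrow> k = k0"
    using assms(2) rank_eq_1_iff by blast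
  have i2: "2 \<le> i" using k0 by simp
  have gt: "j < \<pi> k" if "k \<in> {1..i}" "k \<noteq> k0" for k
  proof (cases "k = i")
    case False
    then show ?thesis using that unique D(3) by (metis atLeastAtMost_iff le_neq_implies_less not_le)
  qed (use D in simp)
  obtain p where p: "p \<in> {1..i}" "\<pi> p = pmin i" using obtain_pmin_pos[of i] D(1) by auto
  have "pmin i \<le> \<pi> k0" using pmin_le k0 by simp
  then have "p = k0" using gt[OF p(1)] p(2) k0(3) by (metis leD order.strict_trans)
  then have m: "pmin i = \<pi> k0" using p by simp
  obtain q where q: "q \<in> {1..i}" "\<pi> q = pmin2 i" "\<pi> q \<noteq> pmin i"
    using obtain_pmin2_pos[OF i2] .
  obtain k1 where k1: "k1 \<in> {1..i}" "Suc j = \<pi> k1" using right by (rule imageE)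
  have "pmin2 i \<le> Suc j" using pmin2_le[OF i2 k1(1)] k1(2) m k0(3) by simp
  moreover have "q \<noteq> k0" using q(3) m by auto
  then have "j < pmin2 i" using gt[OF q(1)] q(2) by simp
  ultimately show ?thesis using i2 i below m k0(3) D(2) by auto
qed

lemma essential_rank_1_if:
  assumes "2 \<le> i" "i < n" "j = pmin2 i - 1" "\<pi> i \<noteq> pmin i" "pmin i + 1 < pmin2 i"
    "\<pi> (Suc i) < pmin2 i"
  shows "(i, j) \<in> essential_set n \<pi>" "rank \<pi> (i, j) = 1"
proof -
  have j: "Suc j = pmin2 i" "pmin i < j" using assms(3,5) by auto
  have gt: "j < \<pi> k" if "k \<in> {1..i}" "\<pi> k \<noteq> pmin i" for k
    using pmin2_le[OF assms(1) that] j(1) by simp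
  obtain p where p: "p \<in> {1..i}" "\<pi> p = pmin i" using obtain_pmin_pos[of i] assms(1) by auto
  obtain q where "q \<in> {1..i}" "\<pi> q = pmin2 i" using obtain_pmin2_pos[OF assms(1)] by blast
  then have "Suc j \<in> \<pi> ` {1..i}" using j by force
  moreover have "(i, j) \<in> diagram n \<pi>"
    unfolding in_diagram_iff
    using gt[of i] gt j assms(1,2,4) pmin2_le_n[of i] pmin_pos[of i] by fastforce
  ultimately show "(i, j) \<in> essential_set n \<pi>"
    unfolding essential_set_iff using assms(2,6) j(1) by simp
  have "p \<noteq> i" using p assms(4) by auto
  then show "rank \<pi> (i, j) = 1"
    unfolding rank_eq_1_iff using p j gt perm_inj
    by (intro exI[of _ p]) (auto, metis atLeastAtMost_iff less_imp_le less_asym)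
qed

lemma essential_rank_1_iff:
  "(i, j) \<in> essential_set n \<pi> \<and> rank \<pi> (i, j) = 1 \<longleftrightarrow>
    2 \<le> i \<and> i < n \<and> j = pmin2 i - 1 \<and> \<pi> i \<noteq> pmin i \<and> pmin i + 1 < pmin2 i
      \<and> \<pi> (Suc i) < pmin2 i"
  using essential_rank_1_imp essential_rank_1_if by blast

end

section \<open>The shape of a permutation\<close>

context nat_perm
begin

text \<open>For Schroeder \<open>\<pi>\<close> the corners of \<open>young_diagram n shape\<close> are \<open>E*(\<pi>)\<close>: a rank-0 corner
  of row \<open>i\<close> sits in column \<open>pmin i - 1\<close>, and a rank-1 corner \<open>(i + 1, pmin2 (i + 1) - 1)\<close> is
  moved to row \<open>i\<close>.\<close>

definition shape :: "nat \<Rightarrow> nat" where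
  "shape i = (if i < n then max (pmin i) (pmin2 (Suc i) - 1) - 1 else 0)"

lemma shape_Suc_le:
  assumes "1 \<le> i" "Suc i \<le> n"
  shows "shape (Suc i) \<le> shape i"
proof (cases "Suc i < n")
  case True
  then show ?thesis
    using pmin_Suc[OF assms(1)] pmin2_Suc_le[of "Suc i"] assms unfolding shape_def by auto
qed (simp add: shape_def)

lemma shape_bound:
  assumes "1 \<le> i" "i \<le> n"
  shows "shape i + i \<le> n"
  using card_greater_pmin[OF assms, of "{}"] card_greater_pmin2[of "Suc i" "{}"] assms
  unfolding shape_def by auto

lemma staircase_shape: "staircase_shape n shape"
  using shape_Suc_le shape_bound by unfold_locales

lemma corners_young_diagram_shape_iff:
  "(a, b) \<in> corners (young_diagram n shape) \<longleftrightarrow>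
    1 \<le> a \<and> a < n \<and> 1 \<le> b \<and> b = shape a \<and> shape (Suc a) < b"
proof
  assume "(a, b) \<in> corners (young_diagram n shape)"
  then have a: "1 \<le> a" "a \<le> n" and b: "1 \<le> b" "b \<le> shape a"
    and below: "\<not> (Suc a \<le> n \<and> b \<le> shape (Suc a))" and right: "\<not> Suc b \<le> shape a"
    unfolding corners_def young_diagram_def by auto
  have "a \<noteq> n" using b by (auto simp: shape_def)
  then have "a < n" using a by simp
  then show "1 \<le> a \<and> a < n \<and> 1 \<le> b \<and> b = shape a \<and> shape (Suc a) < b"
    using a b below right by simp
qed (auto simp: corners_def young_diagram_def)

lemma card_increasing_after_pmin:
  assumes inc: "strict_mono_on S \<pi>" and S: "S \<subseteq> {1..n}" and p: "p \<in> S" "p \<le> i"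
    and i: "1 \<le> i" "i \<le> n" and later: "\<forall>r\<in>S - {p}. i < r"
  shows "card (S - {p}) + i + pmin i \<le> n + 1"
proof (rule card_greater_pmin[OF i])
  show "S - {p} \<subseteq> {i + 1..n}"
  proof
    fix r assume r: "r \<in> S - {p}"
    then have "i < r" using later by blast
    then show "r \<in> {i + 1..n}" using S r by auto
  qed
  have "\<pi> p < \<pi> r" if "r \<in> S - {p}" for r
  proof -
    have "i < r" using later that by blast
    then show ?thesis using strict_mono_onD[OF inc p(1)] that p(2) by simp
  qed
  then show "\<forall>r\<in>S - {p}. pmin i < \<pi> r" using pmin_le[of p i] p(2) S p(1) i(1) by fastforce
qed

lemma card_increasing_after_pmin2:
  assumes inc: "strict_mono_on S \<pi>" and S: "S \<subseteq> {1..n}" and p: "p \<in> S" "p \<le> i" "\<pi> p \<noteq> pmin i"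
    and i: "2 \<le> i" "i \<le> n" and later: "\<forall>r\<in>S - {p}. i < r"
  shows "card (S - {p}) + i + pmin2 i \<le> n + 2"
proof (rule card_greater_pmin2[OF i])
  show "S - {p} \<subseteq> {i + 1..n}"
  proof
    fix r assume r: "r \<in> S - {p}"
    then have "i < r" using later by blast
    then show "r \<in> {i + 1..n}" using S r by auto
  qed
  have "\<pi> p < \<pi> r" if "r \<in> S - {p}" for r
  proof -
    have "i < r" using later that by blast
    then show ?thesis using strict_mono_onD[OF inc p(1)] that p(2) by simp
  qed
  then show "\<forall>r\<in>S - {p}. pmin2 i < \<pi> r" using pmin2_le[OF i(1), of p] p S by fastforce
qed

lemma shape_bound_if_has_increasing:
  assumes "has_increasing n \<pi> k" "2 \<le> k"
  shows "\<exists>i\<in>{1..n}. k + i + shape i \<le> n + 1"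
proof -
  obtain S where S: "S \<subseteq> {1..n}" "card S = k" and inc: "strict_mono_on S \<pi>"
    using assms(1) unfolding has_increasing_def by blast
  have fin: "finite S" using S(1) finite_subset by blast
  have "2 \<le> card S" using S(2) assms(2) by simp
  then obtain p1 p2 where p: "p1 \<in> S" "p2 \<in> S" "p1 < p2"
    and least: "\<forall>r\<in>S - {p1}. p2 \<le> r" "\<forall>r\<in>S. p1 \<le> r"
    by (rule obtain_two_least[OF fin])
  define i where "i = p2 - 1"
  have p_range: "p1 \<in> {1..n}" "p2 \<in> {1..n}" using S(1) p by auto
  then have i: "1 \<le> i" "i < n" "p1 \<le> i" "p2 = Suc i"
    using p(3) unfolding i_def by auto
  have "\<forall>r\<in>S - {p1}. i < r" using least(1) i(4) by (simp add: Suc_le_eq)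
  then have "card (S - {p1}) + i + pmin i \<le> n + 1"
    using i by (intro card_increasing_after_pmin[OF inc S(1) p(1)]) auto
  moreover have "card (S - {p1} - {p2}) + Suc i + pmin2 (Suc i) \<le> n + 2"
  proof (rule card_increasing_after_pmin2)
    show "strict_mono_on (S - {p1}) \<pi>" using inc by (rule monotone_on_subset) blast
    have "pmin (Suc i) \<le> \<pi> p1" using pmin_le[of p1 "Suc i"] i p_range(1) by simp
    then show "\<pi> p2 \<noteq> pmin (Suc i)" using strict_mono_onD[OF inc p] by simp
    show "\<forall>r\<in>S - {p1} - {p2}. Suc i < r" using least(1) i(4) by (auto simp: le_less)
  qed (use S(1) p i in auto)
  moreover have "card (S - {p1}) = k - 1" "card (S - {p1} - {p2}) = k - 2"
    using S(2) p fin by (simp_all add: card_Diff_subset)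
  moreover have "shape i = max (pmin i) (pmin2 (Suc i) - 1) - 1"
    using i(2) by (simp add: shape_def)
  ultimately have "k + i + shape i \<le> n + 1"
    using assms(2) pmin_pos[OF i(1)] by (simp add: max_def) arith
  then show ?thesis using i by auto
qed

end

locale schroeder_perm = nat_perm +
  assumes schroeder: "schroeder n \<pi>"
begin

lemma schroeder_exceeds_between:
  assumes "1 \<le> a" "a < b" "b < q" "q < r" "r \<le> n" "\<pi> a < \<pi> r" "\<pi> b < \<pi> r"
  shows "\<pi> q < \<pi> r"
proof (rule ccontr)
  assume "\<not> \<pi> q < \<pi> r"
  moreover have "\<pi> q \<noteq> \<pi> r" using perm_inj assms by auto
  ultimately have qr: "\<pi> r < \<pi> q" by simp
  have ab: "\<pi> a \<noteq> \<pi> b" using perm_inj assms by auto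
  show False
  proof (cases "\<pi> a < \<pi> b")
    case True
    have "contains_pattern n \<pi> [1,2,4,3]"
      by (rule contains_pattern_4I[OF assms(1-5)])
        (use True qr assms(6,7) in \<open>auto simp: less_4_iff\<close>)
    then show False using schroeder unfolding schroeder_def avoids_def by blast
  next
    case False
    then have "\<pi> b < \<pi> a" using ab by simp
    have "contains_pattern n \<pi> [2,1,4,3]"
      by (rule contains_pattern_4I[OF assms(1-5)])
        (use \<open>\<pi> b < \<pi> a\<close> qr assms(6,7) in \<open>auto simp: less_4_iff\<close>)
    then show False using schroeder unfolding schroeder_def avoids_def by blast
  qed
qed

lemma rank_le_1:
  assumes "(i, j) \<in> diagram n \<pi>"
  shows "rank \<pi> (i, j) \<le> 1"
proof -
  let ?R = "{k. 1 \<le> k \<and> k < i \<and> \<pi> k < j}"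
  have D: "i \<in> {1..n}" "j \<in> {1..n}" "j < \<pi> i" "\<forall>k\<in>{1..i}. \<pi> k \<noteq> j"
    using assms in_diagram_iff by auto
  have "j \<in> \<pi> ` {1..n}" using D(2) permutes_image[OF perm] by simp
  then obtain r where r: "r \<in> {1..n}" "j = \<pi> r" by (rule imageE)
  have "i < r" using D(4) r by (metis atLeastAtMost_iff not_le)
  \<comment> \<open>two earlier rows with values below \<open>j = \<pi> r\<close> would force \<open>\<pi> i < \<pi> r\<close>\<close>
  have no_two: "\<not> (x < y \<and> x \<in> ?R \<and> y \<in> ?R)" for x y
  proof
    assume "x < y \<and> x \<in> ?R \<and> y \<in> ?R"
    then have "\<pi> i < \<pi> r"
      using schroeder_exceeds_between[of x y i r] \<open>i < r\<close> r by auto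
    then show False using D(3) r(2) by simp
  qed
  have "finite ?R" by (rule finite_subset[of _ "{..<i}"]) auto
  moreover have "\<forall>x\<in>?R. \<forall>y\<in>?R. x = y"
  proof (intro ballI)
    fix x y assume "x \<in> ?R" "y \<in> ?R"
    then show "x = y" using no_two[of x y] no_two[of y x] by (cases x y rule: linorder_cases) auto
  qed
  ultimately have "card ?R \<le> Suc 0" using card_le_Suc0_iff_eq by blast
  then show ?thesis unfolding rank_def by simp
qed

lemma essential_star_iff:
  "(a, b) \<in> essential_star n \<pi> \<longleftrightarrow>
    (1 \<le> a \<and> a < n \<and> b = pmin a - 1 \<and> 2 \<le> pmin a \<and> \<pi> (Suc a) < pmin a) \<or>
    (1 \<le> a \<and> Suc a < n \<and> b = pmin2 (Suc a) - 2 \<and> \<pi> (Suc a) \<noteq> pmin (Suc a) \<and>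
      pmin (Suc a) + 1 < pmin2 (Suc a) \<and> \<pi> (Suc (Suc a)) < pmin2 (Suc a))"
  (is "_ \<longleftrightarrow> ?rhs")
proof -
  have "rank \<pi> e \<le> 1" if "e \<in> essential_set n \<pi>" for e
    using that rank_le_1 unfolding essential_set_def by auto
  then have rank_0: "(a, b) \<in> {e \<in> essential_set n \<pi>. rank \<pi> e \<noteq> 1} \<longleftrightarrow>
      (a, b) \<in> essential_set n \<pi> \<and> rank \<pi> (a, b) = 0"
    by fastforce
  have shifted: "(a, b) \<in> {(i - 1, j - 1) | i j. (i, j) \<in> essential_set n \<pi> \<and> rank \<pi> (i, j) = 1} \<longleftrightarrow>
      (Suc a, Suc b) \<in> essential_set n \<pi> \<and> rank \<pi> (Suc a, Suc b) = 1"
  proof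
    assume "(a, b) \<in> {(i - 1, j - 1) | i j. (i, j) \<in> essential_set n \<pi> \<and> rank \<pi> (i, j) = 1}"
    then obtain i j where ij: "a = i - 1" "b = j - 1" "(i, j) \<in> essential_set n \<pi>" "rank \<pi> (i, j) = 1"
      by blast
    then have "2 \<le> i" "2 \<le> j" using essential_rank_1_iff[of i j] pmin_pos[of i] by auto
    then show "(Suc a, Suc b) \<in> essential_set n \<pi> \<and> rank \<pi> (Suc a, Suc b) = 1"
      using ij by (simp add: Suc_diff_1)
  qed force
  have "(a, b) \<in> essential_star n \<pi> \<longleftrightarrow>
      (a, b) \<in> essential_set n \<pi> \<and> rank \<pi> (a, b) = 0 \<or>
      (Suc a, Suc b) \<in> essential_set n \<pi> \<and> rank \<pi> (Suc a, Suc b) = 1"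
    unfolding essential_star_def using rank_0 shifted by blast
  also have "\<dots> \<longleftrightarrow> ?rhs"
    unfolding essential_rank_0_iff essential_rank_1_iff by auto
  finally show ?thesis .
qed

lemma essential_star_iff_new_min:
  assumes a: "1 \<le> a" "a < n" and new: "\<pi> (Suc a) < pmin a"
  shows "(a, b) \<in> essential_star n \<pi> \<longleftrightarrow> 1 \<le> b \<and> b = shape a \<and> shape (Suc a) < b"
proof -
  have s1: "pmin2 (Suc a) = pmin a" and m1: "pmin (Suc a) = \<pi> (Suc a)"
    using pmin2_Suc_less[OF a(1) new] by auto
  have sh: "shape a = pmin a - 1" using a(2) s1 by (simp add: shape_def)
  have "shape (Suc a) < pmin a - 1" if "2 \<le> pmin a"
  proof (cases "Suc a < n")
    case True
    have "pmin2 (Suc (Suc a)) \<le> pmin a" using pmin2_Suc_le[of "Suc a"] s1 a by simp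
    then show ?thesis using True m1 new that by (simp add: shape_def max_def, arith)
  qed (use that in \<open>simp add: shape_def\<close>)
  then show ?thesis unfolding essential_star_iff using a new m1 sh by auto
qed

lemma essential_star_iff_old_min:
  assumes a: "1 \<le> a" "a < n" and old: "pmin a < \<pi> (Suc a)"
  shows "(a, b) \<in> essential_star n \<pi> \<longleftrightarrow> 1 \<le> b \<and> b = shape a \<and> shape (Suc a) < b"
proof -
  have m1: "pmin (Suc a) = pmin a" using pmin2_Suc_greater(1)[OF a(1) old] .
  have ms: "pmin a < pmin2 (Suc a)" using pmin_less_pmin2[of "Suc a"] m1 a by simp
  have sh: "shape a = pmin2 (Suc a) - 2" using a(2) ms by (simp add: shape_def)
  show ?thesis
  proof (cases "Suc a < n")
    case False
    then have "Suc a = n" using a by simp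
    then have "shape a = 0" using sh pmin2_n a by auto
    then show ?thesis unfolding essential_star_iff using False old by auto
  next
    case True
    have sh1: "shape (Suc a) = max (pmin a) (pmin2 (Suc (Suc a)) - 1) - 1"
      using True m1 by (simp add: shape_def)
    have step: "pmin2 (Suc (Suc a)) < pmin2 (Suc a) \<longleftrightarrow> \<pi> (Suc (Suc a)) < pmin2 (Suc a)"
      using pmin2_Suc_less_iff[of "Suc a"] a by simp
    have "1 \<le> pmin a" "pmin (Suc (Suc a)) < pmin2 (Suc (Suc a))" "1 \<le> pmin (Suc (Suc a))"
      using pmin_pos[OF a(1)] pmin_less_pmin2[of "Suc (Suc a)"] pmin_pos[of "Suc (Suc a)"]
      by simp_all
    then have "shape (Suc a) < pmin2 (Suc a) - 2 \<longleftrightarrow>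
        pmin a + 1 < pmin2 (Suc a) \<and> \<pi> (Suc (Suc a)) < pmin2 (Suc a)"
      unfolding sh1 step[symmetric] by (simp add: max_def) arith
    then show ?thesis unfolding essential_star_iff using a True old m1 sh by auto
  qed
qed

lemma corners_young_diagram_shape: "corners (young_diagram n shape) = essential_star n \<pi>"
proof (intro set_eqI)
  fix x :: "nat \<times> nat"
  obtain a b where x: "x = (a, b)" by (cases x)
  show "x \<in> corners (young_diagram n shape) \<longleftrightarrow> x \<in> essential_star n \<pi>"
  proof (cases "1 \<le> a \<and> a < n")
    case True
    then consider "\<pi> (Suc a) < pmin a" | "pmin a < \<pi> (Suc a)"
      using perm_Suc_ne_pmin[of a] by linarith
    then show ?thesis
      unfolding x corners_young_diagram_shape_iff
      using essential_star_iff_new_min essential_star_iff_old_min True by cases auto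
  next
    case False
    then show ?thesis unfolding x corners_young_diagram_shape_iff essential_star_iff by auto
  qed
qed

lemma phi_eq_dominant_perm: "phi n \<pi> = dominant_perm n shape"
proof -
  interpret staircase_shape n shape by (rule staircase_shape)
  show ?thesis
    using dominant_perm_permutes rank_dominant_perm
    by (intro phi_eqI) (simp_all add: essential_set_dominant_perm corners_young_diagram_shape)
qed

lemma phi_schroeder_perm: "schroeder_perm n (phi n \<pi>)"
proof -
  interpret staircase_shape n shape by (rule staircase_shape)
  show ?thesis
    unfolding phi_eq_dominant_perm
    by unfold_locales (rule dominant_perm_permutes, rule dominant_perm_schroeder)
qed

lemma shape_phi:
  assumes "i \<in> {1..n}"
  shows "nat_perm.shape n (phi n \<pi>) i = shape i"
proof -
  interpret sh: staircase_shape n shape by (rule staircase_shape)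
  interpret \<sigma>: schroeder_perm n "phi n \<pi>" by (rule phi_schroeder_perm)
  interpret \<sigma>_sh: staircase_shape n \<sigma>.shape by (rule \<sigma>.staircase_shape)
  have "dominant_perm n \<sigma>.shape = phi n (phi n \<pi>)"
    by (rule \<sigma>.phi_eq_dominant_perm[symmetric])
  also have "\<dots> = phi n \<pi>"
    using phi_eq_self[OF \<sigma>.perm] sh.rank_dominant_perm unfolding phi_eq_dominant_perm by simp
  also have "\<dots> = dominant_perm n shape"
    by (rule phi_eq_dominant_perm)
  finally have "young_diagram n \<sigma>.shape = young_diagram n shape"
    using \<sigma>_sh.diagram_dominant_perm sh.diagram_dominant_perm by metis
  then show ?thesis using young_diagram_eq_imp_eq assms by blast
qed

lemma has_increasing_after_pair:
  assumes ab: "1 \<le> a" "a < b" "b \<le> n" and t: "t \<le> n" "\<pi> a \<le> t" "\<pi> b \<le> t"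
    and low: "\<And>r. r \<in> {1..b} \<Longrightarrow> \<pi> r \<le> t \<Longrightarrow> r = a \<or> r = b"
  shows "has_increasing n \<pi> (n + 3 - t - b)"
    and "\<pi> a < \<pi> b \<Longrightarrow> has_increasing n \<pi> (n + 4 - t - b)"
proof -
  define T where "T = {r\<in>{b+1..n}. t < \<pi> r}"
  have "{r\<in>{1..b}. \<pi> r \<le> t} = {a, b}" using low ab t by auto
  then have card_T: "card T + b = n - t + 2"
    using card_later_greater[OF perm ab(3) t(1)] ab by (simp add: T_def)
  have T: "T \<subseteq> {1..n}" "b \<notin> T" "a \<notin> T" "finite T" using ab by (auto simp: T_def)
  \<comment> \<open>every later value above \<open>\<pi> a\<close> and \<open>\<pi> b\<close> exceeds all values between\<close>
  have mono_T: "strict_mono_on T \<pi>"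
  proof (rule strict_mono_onI)
    fix q r assume "q \<in> T" "r \<in> T" "q < r"
    then show "\<pi> q < \<pi> r"
      using schroeder_exceeds_between[of a b q r] ab t unfolding T_def by auto
  qed
  have mono_bT: "strict_mono_on (insert b T) \<pi>"
    using t(3) by (intro strict_mono_on_insert_least[OF mono_T]) (auto simp: T_def)
  then show "has_increasing n \<pi> (n + 3 - t - b)"
    using T card_T ab by (intro has_increasingI[of "insert b T"]) auto
  assume "\<pi> a < \<pi> b"
  then have "strict_mono_on (insert a (insert b T)) \<pi>"
    using t(2) ab(2) by (intro strict_mono_on_insert_least[OF mono_bT]) (auto simp: T_def)
  then show "has_increasing n \<pi> (n + 4 - t - b)"
    using T card_T ab by (intro has_increasingI[of "insert a (insert b T)"]) auto
qed

lemma has_increasing_new_min: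
  assumes i: "1 \<le> i" "i < n" and new: "\<pi> (Suc i) < pmin i"
  shows "has_increasing n \<pi> (n + 2 - i - pmin i)"
proof -
  obtain p where p: "p \<in> {1..i}" "\<pi> p = pmin i" using obtain_pmin_pos[OF i(1)] .
  have s: "pmin2 (Suc i) = pmin i" "pmin (Suc i) = \<pi> (Suc i)"
    using pmin2_Suc_less[OF i(1) new] by auto
  have "has_increasing n \<pi> (n + 3 - pmin i - Suc i)"
  proof (rule has_increasing_after_pair(1))
    fix r assume r: "r \<in> {1..Suc i}" "\<pi> r \<le> pmin i"
    have "\<pi> r = \<pi> (Suc i) \<or> \<pi> r = \<pi> p"
    proof (cases "\<pi> r = \<pi> (Suc i)")
      case False
      then show ?thesis using pmin2_le[of "Suc i" r] i(1) r s p(2) by simp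
    qed simp
    then show "r = p \<or> r = Suc i" using perm_inj[of r p] perm_inj[of r "Suc i"] by blast
  qed (use p i new pmin_le_n[of i] in auto)
  then show ?thesis by (simp add: add.commute)
qed

lemma has_increasing_old_min:
  assumes i: "1 \<le> i" "i < n" and old: "pmin i < \<pi> (Suc i)"
  shows "has_increasing n \<pi> (n + 3 - i - pmin2 (Suc i))"
proof -
  have j: "2 \<le> Suc i" "Suc i \<le> n" using i by auto
  have m: "pmin (Suc i) = pmin i" using pmin2_Suc_greater(1)[OF i(1) old] .
  obtain p where p: "p \<in> {1..i}" "\<pi> p = pmin i" using obtain_pmin_pos[OF i(1)] .
  obtain q where q: "q \<in> {1..Suc i}" "\<pi> q = pmin2 (Suc i)" "\<pi> q \<noteq> pmin i"
    using obtain_pmin2_pos[OF j(1)] m by metis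
  have ms: "pmin i < pmin2 (Suc i)" using pmin_less_pmin2[OF j(1)] m by simp
  have t: "pmin2 (Suc i) \<le> n" using pmin2_le_n[OF j] .
  have low: "r = p \<or> r = q" if "r \<in> {1..Suc i}" "\<pi> r \<le> pmin2 (Suc i)" for r
  proof -
    have "\<pi> r = \<pi> p \<or> \<pi> r = \<pi> q"
    proof (cases "\<pi> r = pmin i")
      case False
      then show ?thesis using pmin2_le[OF j(1) that(1)] that(2) m q(2) by simp
    qed (use p in simp)
    then show ?thesis using perm_inj[of r p] perm_inj[of r q] by blast
  qed
  have "p \<noteq> q" using p q by auto
  then consider "p < q" | "q < p" by linarith
  then show ?thesis
  proof cases
    case 1
    have "has_increasing n \<pi> (n + 4 - pmin2 (Suc i) - q)"
    proof (rule has_increasing_after_pair(2))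
      fix r assume "r \<in> {1..q}" "\<pi> r \<le> pmin2 (Suc i)"
      then show "r = p \<or> r = q" using low[of r] q(1) by auto
    qed (use p q ms t j 1 in auto)
    then show ?thesis by (rule has_increasing_mono) (use q(1) in auto)
  next
    case 2
    have "has_increasing n \<pi> (n + 3 - pmin2 (Suc i) - p)"
    proof (rule has_increasing_after_pair(1))
      fix r assume "r \<in> {1..p}" "\<pi> r \<le> pmin2 (Suc i)"
      then show "r = q \<or> r = p" using low[of r] p(1) by auto
    qed (use p q ms t j 2 in auto)
    then show ?thesis by (rule has_increasing_mono) (use p(1) in auto)
  qed
qed

lemma has_increasing_if_shape_bound:
  assumes i: "i \<in> {1..n}" and bound: "k + i + shape i \<le> n + 1"
  shows "has_increasing n \<pi> k"
proof (cases "k \<le> 1")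
  case True
  show ?thesis
  proof (rule has_increasingI[of "{1}"])
    show "strict_mono_on {1} \<pi>" by (rule strict_mono_onI) simp
  qed (use True i in auto)
next
  case False
  then have "i \<noteq> n" using bound by (auto simp: shape_def)
  then have i': "1 \<le> i" "i < n" using i by auto
  consider (new) "\<pi> (Suc i) < pmin i" | (old) "pmin i < \<pi> (Suc i)"
    using perm_Suc_ne_pmin[OF i'(1)] by linarith
  then show ?thesis
  proof cases
    case new
    then have "shape i = pmin i - 1"
      using pmin2_Suc_less[OF i'(1) new] i'(2) by (simp add: shape_def)
    then show ?thesis
      using bound pmin_pos[OF i'(1)]
      by (intro has_increasing_mono[OF has_increasing_new_min[OF i' new]]) auto
  next
    case old
    have "pmin i < pmin2 (Suc i)"
      using pmin2_Suc_greater(1)[OF i'(1) old] pmin_less_pmin2[of "Suc i"] i'(1) by simp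
    moreover from this have "shape i = pmin2 (Suc i) - 2"
      using i'(2) by (simp add: shape_def)
    then show ?thesis
      using bound pmin_pos[OF i'(1)]
      by (intro has_increasing_mono[OF has_increasing_old_min[OF i' old]]) auto
  qed
qed

lemma has_increasing_iff_shape:
  assumes "1 \<le> k"
  shows "has_increasing n \<pi> k \<longleftrightarrow> (\<exists>i\<in>{1..n}. k + i + shape i \<le> n + 1)"
proof
  assume inc: "has_increasing n \<pi> k"
  show "\<exists>i\<in>{1..n}. k + i + shape i \<le> n + 1"
  proof (cases "k = 1")
    case True
    then have "1 \<le> n" using inc unfolding has_increasing_def by (auto simp: card_1_singleton_iff)
    then show ?thesis using True by (intro bexI[of _ n]) (auto simp: shape_def)
  qed (use shape_bound_if_has_increasing[OF inc] assms in auto)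
qed (use has_increasing_if_shape_bound in blast)

end

theorem theorem3p1:
  fixes n k :: nat and \<pi> :: "nat \<Rightarrow> nat"
  assumes "\<pi> permutes {1..n}" and "schroeder n \<pi>" and "k \<ge> 1"
  shows "avoids n \<pi> (incr_pattern k) \<longleftrightarrow> avoids n (phi n \<pi>) (incr_pattern k)"
proof -
  interpret schroeder_perm n \<pi> using assms(1,2) by unfold_locales
  interpret \<sigma>: schroeder_perm n "phi n \<pi>" by (rule phi_schroeder_perm)
  have "has_increasing n \<pi> k \<longleftrightarrow> has_increasing n (phi n \<pi>) k"
    unfolding has_increasing_iff_shape[OF assms(3)] \<sigma>.has_increasing_iff_shape[OF assms(3)]
    using shape_phi by auto
  then show ?thesis unfolding avoids_def contains_incr_pattern_iff by simp
qed

end
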